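(* Let $F:\mathbb C^n\to\mathbb C^n$ be a square system of polynomials, and let $I\in\mathbb{IC}^n$ be a strong interval approximate zero of $F$, witnessed by a point $\tilde x\in I$ and an invertible matrix $Y\in\mathbb C^{n\times n}$ (so that $K_{\tilde x,Y}(I)\subset I$ and $\sqrt2\,\lVert \mathbf 1_n - Y\cdot\square\mathrm JF(I)\rVert_\infty<1$). Let $x^*\in I$ be the unique zero of $F$ in $I$. Let $x\in I$ be any point, set $x_0:=x$ and $x_i:=x_{i-1}-Y\,F(x_{i-1})$ for $i\ge 1$. Then the sequence $(x_i)_{i\ge0}$ converges (at least linearly) to $x^*$.
   Context: $\mathbb{IR}$ is the set of compact real intervals $[a,b]$, with operations $X\circ Y=\{x\circ y: x\in X,y\in Y\}$ for $\circ\in\{+,-,\cdot,/\}$ ($0\notin Y$ for division). $\mathbb{IC}=\{X+iY: X,Y\in\mathbb{IR}\}$ is the set of rectangular complex intervals, where $X+iY=\{x+iy:x\in X,y\in Y\}$, with operations defined for $I=X+iY$, $J=W+iZ$ by $I\pm J=(X\pm W)+i(Y\pm Z)$, $I\cdot J=(X W-YZ)+i(XZ+YW)$, $I/J=\frac{XW+YZ}{WW+ZZ}+i\frac{YW-XZ}{WW+ZZ}$. Operations on $\mathbb{IC}^n$ are componentwise; for an interval matrix $A=(A_{i,j})\in\mathbb{IC}^{n\times n}$ and $I\in\mathbb{IC}^n$, $A\cdot I:=\sum_{j=1}^n I_j\cdot(A_{1,j},\dots,A_{n,j})^T$. A point $x\in\mathbb C^n$ is identified with the degenerate interval vector $[\mathrm{Re}\,x,\mathrm{Re}\,x]+i[\mathrm{Im}\,x,\mathrm{Im}\,x]$.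 An interval enclosure of a map $F:\mathbb C^n\to\mathbb C^m$ is a map $\square F:\mathbb{IC}^n\to\mathbb{IC}^m$ with $\{F(x):x\in I\}\subseteq\square F(I)$ for all $I$; $\square F$ and $\square\mathrm JF$ denote fixed interval enclosures of $F$ and of its Jacobian $\mathrm JF:\mathbb C^n\to\mathbb C^{n\times n}$. For $A\in\mathbb{IC}^{n\times n}$, $\lVert A\rVert_\infty:=\max_{B\in A}\max_{v\in\mathbb C^n\setminus\{0\}}\lVert Bv\rVert_\infty/\lVert v\rVert_\infty$ with $\lVert v\rVert_\infty=\max_i|v_i|$. For $I\in\mathbb{IC}^n$, $x\in\mathbb C^n$ and invertible $Y\in\mathbb C^{n\times n}$, the Krawczyk operator is $K_{x,Y}(I):=x-Y\cdot\square F(x)+(\mathbf 1_n-Y\cdot\square\mathrm JF(I))(I-x)$, where $\mathbf 1_n$ is the identity matrix. $I$ is a strong interval approximate zero of $F$ if there exist $x\in I$ and an invertible $Y\in\mathbb C^{n\times n}$ with $K_{x,Y}(I)\subset I$ and $\sqrt2\,\lVert\mathbf 1_n-Y\cdot\square\mathrm JF(I)\rVert_\infty<1$; such an $I$ contains exactly one zero of $F$. *)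

theory Defs
  imports "HOL-Analysis.Analysis"
begin

text \<open>A compact real interval is represented by its set of points.\<close>
type_synonym rint = "real set"

definition is_rint :: "rint \<Rightarrow> bool" where
  "is_rint X \<longleftrightarrow> (\<exists>a b. a \<le> b \<and> X = {a..b})"

definition radd :: "rint \<Rightarrow> rint \<Rightarrow> rint" where
  "radd X Y = {x + y | x y. x \<in> X \<and> y \<in> Y}"

definition rsub :: "rint \<Rightarrow> rint \<Rightarrow> rint" where
  "rsub X Y = {x - y | x y. x \<in> X \<and> y \<in> Y}"

definition rmul :: "rint \<Rightarrow> rint \<Rightarrow> rint" where
  "rmul X Y = {x * y | x y. x \<in> X \<and> y \<in> Y}"

text \<open>The pair (X, Y) stands for X + iY.\<close>
type_synonym cint = "rint \<times> rint"

definition is_cint :: "cint \<Rightarrow> bool" where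
  "is_cint I \<longleftrightarrow> is_rint (fst I) \<and> is_rint (snd I)"

definition cmem :: "complex \<Rightarrow> cint \<Rightarrow> bool" where
  "cmem z I \<longleftrightarrow> Re z \<in> fst I \<and> Im z \<in> snd I"

definition cpt :: "complex \<Rightarrow> cint" where
  "cpt z = ({Re z}, {Im z})"

definition cadd :: "cint \<Rightarrow> cint \<Rightarrow> cint" where
  "cadd I J = (radd (fst I) (fst J), radd (snd I) (snd J))"

definition csub :: "cint \<Rightarrow> cint \<Rightarrow> cint" where
  "csub I J = (rsub (fst I) (fst J), rsub (snd I) (snd J))"

definition cmul :: "cint \<Rightarrow> cint \<Rightarrow> cint" where
  "cmul I J = (rsub (rmul (fst I) (fst J)) (rmul (snd I) (snd J)),
               radd (rmul (fst I) (snd J)) (rmul (snd I) (fst J)))"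

text \<open>Finite iterated sum of complex intervals (interval addition is the Minkowski
  sum, hence associative and commutative); the empty sum is the point 0.\<close>
definition csum :: "('i \<Rightarrow> cint) \<Rightarrow> 'i list \<Rightarrow> cint" where
  "csum f xs = foldr (\<lambda>j acc. cadd (f j) acc) xs (cpt 0)"

definition idx :: "'n::finite list" where
  "idx = (SOME xs. distinct xs \<and> set xs = UNIV)"

definition ivec_valid :: "cint ^ 'n \<Rightarrow> bool" where
  "ivec_valid I \<longleftrightarrow> (\<forall>i. is_cint (I $ i))"

definition imat_valid :: "cint ^ 'n ^ 'm \<Rightarrow> bool" where
  "imat_valid A \<longleftrightarrow> (\<forall>i j. is_cint (A $ i $ j))"

definition vmem :: "complex ^ 'n \<Rightarrow> cint ^ 'n \<Rightarrow> bool" where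
  "vmem x I \<longleftrightarrow> (\<forall>i. cmem (x $ i) (I $ i))"

definition mmem :: "complex ^ 'n ^ 'm \<Rightarrow> cint ^ 'n ^ 'm \<Rightarrow> bool" where
  "mmem B A \<longleftrightarrow> (\<forall>i j. cmem (B $ i $ j) (A $ i $ j))"

definition vpt :: "complex ^ 'n \<Rightarrow> cint ^ 'n" where
  "vpt x = (\<chi> i. cpt (x $ i))"

definition mpt :: "complex ^ 'n ^ 'm \<Rightarrow> cint ^ 'n ^ 'm" where
  "mpt B = (\<chi> i j. cpt (B $ i $ j))"

definition vadd :: "cint ^ 'n \<Rightarrow> cint ^ 'n \<Rightarrow> cint ^ 'n" where
  "vadd I J = (\<chi> i. cadd (I $ i) (J $ i))"

definition vsub :: "cint ^ 'n \<Rightarrow> cint ^ 'n \<Rightarrow> cint ^ 'n" where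
  "vsub I J = (\<chi> i. csub (I $ i) (J $ i))"

definition msub :: "cint ^ 'n ^ 'm \<Rightarrow> cint ^ 'n ^ 'm \<Rightarrow> cint ^ 'n ^ 'm" where
  "msub A B = (\<chi> i j. csub (A $ i $ j) (B $ i $ j))"

definition mvmul :: "cint ^ 'n::finite ^ 'm \<Rightarrow> cint ^ 'n \<Rightarrow> cint ^ 'm" where
  "mvmul A I = (\<chi> i. csum (\<lambda>j. cmul (I $ j) (A $ i $ j)) idx)"

definition mmmul :: "cint ^ 'k::finite ^ 'm \<Rightarrow> cint ^ 'n ^ 'k \<Rightarrow> cint ^ 'n ^ 'm" where
  "mmmul A B = (\<chi> i j. csum (\<lambda>k. cmul (B $ k $ j) (A $ i $ k)) idx)"

definition mid :: "cint ^ 'n ^ 'n" where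
  "mid = mpt (mat 1)"

definition vnorm_inf :: "complex ^ 'n::finite \<Rightarrow> real" where
  "vnorm_inf v = Max (range (\<lambda>i. cmod (v $ i)))"

definition opnorm_inf :: "complex ^ 'n::finite ^ 'm::finite \<Rightarrow> real" where
  "opnorm_inf B = Sup {vnorm_inf (B *v v) / vnorm_inf v | v. v \<noteq> 0}"

definition inorm_inf :: "cint ^ 'n::finite ^ 'm::finite \<Rightarrow> real" where
  "inorm_inf A = Sup {opnorm_inf B | B. mmem B A}"

inductive cpoly :: "(complex ^ 'n \<Rightarrow> complex) \<Rightarrow> bool" where
  cpoly_const: "cpoly (\<lambda>x. c)"
| cpoly_var: "cpoly (\<lambda>x. x $ i)"
| cpoly_add: "cpoly f \<Longrightarrow> cpoly g \<Longrightarrow> cpoly (\<lambda>x. f x + g x)"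
| cpoly_mult: "cpoly f \<Longrightarrow> cpoly g \<Longrightarrow> cpoly (\<lambda>x. f x * g x)"

definition poly_system :: "(complex ^ 'n \<Rightarrow> complex ^ 'm) \<Rightarrow> bool" where
  "poly_system F \<longleftrightarrow> (\<forall>i. cpoly (\<lambda>x. F x $ i))"

definition is_jacobian :: "(complex ^ 'n \<Rightarrow> complex ^ 'm) \<Rightarrow> (complex ^ 'n \<Rightarrow> complex ^ 'n ^ 'm) \<Rightarrow> bool" where
  "is_jacobian F JF \<longleftrightarrow> (\<forall>x. (F has_derivative (\<lambda>h. JF x *v h)) (at x))"

definition vec_enclosure :: "(complex ^ 'n \<Rightarrow> complex ^ 'm) \<Rightarrow> (cint ^ 'n \<Rightarrow> cint ^ 'm) \<Rightarrow> bool" where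
  "vec_enclosure F FI \<longleftrightarrow>
     (\<forall>I. ivec_valid I \<longrightarrow> ivec_valid (FI I) \<and> (\<forall>x. vmem x I \<longrightarrow> vmem (F x) (FI I)))"

definition mat_enclosure :: "(complex ^ 'n \<Rightarrow> complex ^ 'k ^ 'm) \<Rightarrow> (cint ^ 'n \<Rightarrow> cint ^ 'k ^ 'm) \<Rightarrow> bool" where
  "mat_enclosure G GI \<longleftrightarrow>
     (\<forall>I. ivec_valid I \<longrightarrow> imat_valid (GI I) \<and> (\<forall>x. vmem x I \<longrightarrow> mmem (G x) (GI I)))"

definition krawczyk ::
  "(cint ^ 'n::finite \<Rightarrow> cint ^ 'n) \<Rightarrow> (cint ^ 'n \<Rightarrow> cint ^ 'n ^ 'n) \<Rightarrow>
   complex ^ 'n \<Rightarrow> complex ^ 'n ^ 'n \<Rightarrow> cint ^ 'n \<Rightarrow> cint ^ 'n" where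
  "krawczyk FI JFI x Y I =
     vadd (vsub (vpt x) (mvmul (mpt Y) (FI (vpt x))))
          (mvmul (msub mid (mmmul (mpt Y) (JFI I))) (vsub I (vpt x)))"

definition ivec_subset :: "cint ^ 'n \<Rightarrow> cint ^ 'n \<Rightarrow> bool" where
  "ivec_subset J I \<longleftrightarrow> (\<forall>i. fst (J $ i) \<subseteq> fst (I $ i) \<and> snd (J $ i) \<subseteq> snd (I $ i))"

end

theory Submission
  imports Defs
begin

(* Let G z = z - Y F z, so that x_{i+1} = G x_i and G x* = x*. For z, w in the box I, the real
   part of each coordinate of G z - G w equals the same part of (1 - Y JF(xi)) (z - w) for some
   xi on the segment from w to z, hence in I, and likewise the imaginary part (for another xi):
   this is the mean value theorem applied to a real-valued function of one variable. For
   w = x~ this places G z in K(I), which lies in I, so G maps I into itself. For w = x* it bounds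
   the real and imaginary parts of each coordinate of G z - x* by rho |z - x*|, where
   rho = |1 - Y JF(I)|, so G contracts towards x* with factor sqrt 2 rho < 1. *)

section \<open>Inclusion isotonicity of interval arithmetic\<close>

lemma cmem_cpt: "cmem z (cpt z)"
  by (simp add: cmem_def cpt_def)

lemma cmem_cadd: "cmem u U \<Longrightarrow> cmem v V \<Longrightarrow> cmem (u + v) (cadd U V)"
  by (auto simp: cmem_def cadd_def radd_def)

lemma cmem_csub: "cmem u U \<Longrightarrow> cmem v V \<Longrightarrow> cmem (u - v) (csub U V)"
  by (auto simp: cmem_def csub_def rsub_def)

lemma cmem_cmul: "cmem u U \<Longrightarrow> cmem v V \<Longrightarrow> cmem (u * v) (cmul U V)"
  by (auto simp: cmem_def cmul_def rsub_def radd_def rmul_def)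

lemma cmem_csum: "(\<And>j. cmem (f j) (U j)) \<Longrightarrow> cmem (\<Sum>j\<leftarrow>js. f j) (csum U js)"
  by (induction js) (simp_all add: csum_def cmem_cadd cmem_cpt[of 0, simplified])

lemma idx_enumerates_UNIV: "distinct (idx :: 'n::finite list) \<and> set (idx :: 'n list) = UNIV"
proof -
  obtain js :: "'n list" where "distinct js \<and> set js = UNIV"
    using finite_distinct_list[of "UNIV :: 'n set"] by auto
  then show ?thesis
    unfolding idx_def by (rule someI)
qed

lemma sum_UNIV_idx: "sum f (UNIV :: 'n::finite set) = (\<Sum>j\<leftarrow>idx. f j)"
  using idx_enumerates_UNIV sum.distinct_set_conv_list[of "idx :: 'n list" f] by metis

lemma vmem_vpt: "vmem x (vpt x)"
  by (simp add: vmem_def vpt_def cmem_cpt)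

lemma mmem_mpt: "mmem B (mpt B)"
  by (simp add: mmem_def mpt_def cmem_cpt)

lemma vmem_vadd: "vmem u U \<Longrightarrow> vmem v V \<Longrightarrow> vmem (u + v) (vadd U V)"
  by (simp add: vmem_def vadd_def cmem_cadd)

lemma vmem_vsub: "vmem u U \<Longrightarrow> vmem v V \<Longrightarrow> vmem (u - v) (vsub U V)"
  by (simp add: vmem_def vsub_def cmem_csub)

lemma mmem_msub: "mmem B A \<Longrightarrow> mmem C A' \<Longrightarrow> mmem (B - C) (msub A A')"
  by (simp add: mmem_def msub_def cmem_csub)

lemma vmem_mvmul: "mmem B A \<Longrightarrow> vmem v V \<Longrightarrow> vmem (B *v v) (mvmul A V)"
  unfolding vmem_def mvmul_def matrix_vector_mult_def
  by (auto simp: sum_UNIV_idx mmem_def mult.commute intro!: cmem_csum cmem_cmul)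

lemma mmem_mmmul: "mmem B A \<Longrightarrow> mmem C A' \<Longrightarrow> mmem (B ** C) (mmmul A A')"
  unfolding mmem_def mmmul_def matrix_matrix_mult_def
  by (auto simp: sum_UNIV_idx mult.commute[of "B $ _ $ _"] intro!: cmem_csum cmem_cmul)

text \<open>Compactness only serves to bound the set whose supremum is inorm_inf: the supremum of a
  set of reals that is unbounded above is an unspecified value.\<close>
definition cint_compact :: "cint \<Rightarrow> bool" where
  "cint_compact U \<longleftrightarrow> compact (fst U) \<and> compact (snd U)"

lemma compact_set_binop:
  fixes f :: "'a::topological_space \<Rightarrow> 'b::topological_space \<Rightarrow> 'c::topological_space"
  assumes "compact X" "compact Y" "continuous_on UNIV (\<lambda>p. f (fst p) (snd p))"
  shows "compact {f x y | x y. x \<in> X \<and> y \<in> Y}"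
proof -
  have "{f x y | x y. x \<in> X \<and> y \<in> Y} = (\<lambda>p. f (fst p) (snd p)) ` (X \<times> Y)"
    by force
  then show ?thesis
    using assms by (metis compact_Times compact_continuous_image continuous_on_subset subset_UNIV)
qed

lemma compact_radd: "compact X \<Longrightarrow> compact Y \<Longrightarrow> compact (radd X Y)"
  unfolding radd_def by (erule compact_set_binop, assumption, intro continuous_intros)

lemma compact_rsub: "compact X \<Longrightarrow> compact Y \<Longrightarrow> compact (rsub X Y)"
  unfolding rsub_def by (erule compact_set_binop, assumption, intro continuous_intros)

lemma compact_rmul: "compact X \<Longrightarrow> compact Y \<Longrightarrow> compact (rmul X Y)"
  unfolding rmul_def by (erule compact_set_binop, assumption, intro continuous_intros)

lemma cint_compact_cpt: "cint_compact (cpt z)"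
  by (simp add: cint_compact_def cpt_def)

lemma cint_compact_cadd: "cint_compact U \<Longrightarrow> cint_compact V \<Longrightarrow> cint_compact (cadd U V)"
  by (simp add: cint_compact_def cadd_def compact_radd)

lemma cint_compact_csub: "cint_compact U \<Longrightarrow> cint_compact V \<Longrightarrow> cint_compact (csub U V)"
  by (simp add: cint_compact_def csub_def compact_rsub)

lemma cint_compact_cmul: "cint_compact U \<Longrightarrow> cint_compact V \<Longrightarrow> cint_compact (cmul U V)"
  by (simp add: cint_compact_def cmul_def compact_rsub compact_radd compact_rmul)

lemma cint_compact_csum: "(\<And>j. cint_compact (U j)) \<Longrightarrow> cint_compact (csum U js)"
  by (induction js) (simp_all add: csum_def cint_compact_cpt cint_compact_cadd)

lemma cint_compact_if_is_cint: "is_cint U \<Longrightarrow> cint_compact U"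
  by (auto simp: is_cint_def is_rint_def cint_compact_def)

lemma cint_compact_cmod_bounded:
  assumes "cint_compact U"
  shows "\<exists>K. \<forall>z. cmem z U \<longrightarrow> cmod z \<le> K"
proof -
  have "bounded (fst U)" "bounded (snd U)"
    using assms compact_imp_bounded unfolding cint_compact_def by auto
  then obtain K1 K2 where "\<forall>x\<in>fst U. \<bar>x\<bar> \<le> K1" "\<forall>y\<in>snd U. \<bar>y\<bar> \<le> K2"
    unfolding bounded_iff real_norm_def by blast
  then have "cmod z \<le> K1 + K2" if "cmem z U" for z
    using that cmod_le[of z] unfolding cmem_def by fastforce
  then show ?thesis
    by blast
qed

lemma imat_compact_entries_bounded:
  fixes A :: "cint ^ 'n::finite ^ 'm::finite"
  assumes "\<And>i j. cint_compact (A $ i $ j)"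
  obtains K where "\<And>B i j. mmem B A \<Longrightarrow> cmod (B $ i $ j) \<le> K"
proof -
  obtain Kf where Kf: "\<And>i j z. cmem z (A $ i $ j) \<Longrightarrow> cmod z \<le> Kf i j"
    using cint_compact_cmod_bounded[OF assms] by metis
  define K where "K = Max (range (\<lambda>(i, j). Kf i j))"
  have "Kf i j \<le> K" for i j
    unfolding K_def by (rule Max_ge) (auto intro: rev_image_eqI[of "(i, j)"])
  then show ?thesis
    using that Kf unfolding mmem_def by (meson order.trans)
qed

lemma cint_compact_krawczyk_matrix:
  fixes J :: "cint ^ 'n::finite ^ 'm::finite"
  assumes "imat_valid J"
  shows "cint_compact (msub mid (mmmul (mpt Y) J) $ i $ j)"
  using assms unfolding msub_def mid_def mpt_def mmmul_def imat_valid_def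
  by (auto intro!: cint_compact_csub cint_compact_cpt cint_compact_csum cint_compact_cmul
      simp: cint_compact_if_is_cint)

lemma cmod_le_vnorm_inf: "cmod (v $ i) \<le> vnorm_inf v"
  unfolding vnorm_inf_def by (rule Max_ge) auto

lemma vnorm_inf_le: "(\<And>i. cmod (v $ i) \<le> K) \<Longrightarrow> vnorm_inf v \<le> K"
  unfolding vnorm_inf_def by (subst Max_le_iff) auto

lemma vnorm_inf_nonneg: "0 \<le> vnorm_inf v"
  using cmod_le_vnorm_inf[of v] norm_ge_zero order.trans by blast

lemma vnorm_inf_pos: "v \<noteq> 0 \<Longrightarrow> 0 < vnorm_inf v"
  by (metis cmod_le_vnorm_inf vec_eq_iff zero_index zero_less_norm_iff order_less_le_trans)

lemma norm_le_card_vnorm_inf: "norm v \<le> real CARD('n) * vnorm_inf (v :: complex ^ 'n::finite)"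
proof -
  have "norm v \<le> (\<Sum>i\<in>UNIV. cmod (v $ i))"
    unfolding norm_vec_def by (rule L2_set_le_sum) simp
  also have "\<dots> \<le> (\<Sum>i\<in>(UNIV :: 'n set). vnorm_inf v)"
    by (rule sum_mono) (rule cmod_le_vnorm_inf)
  finally show ?thesis
    by simp
qed

lemma vnorm_inf_mult_le:
  fixes B :: "complex ^ 'n::finite ^ 'm::finite"
  assumes "\<And>i j. cmod (B $ i $ j) \<le> K"
  shows "vnorm_inf (B *v v) \<le> real CARD('n) * K * vnorm_inf v"
proof (rule vnorm_inf_le)
  fix i
  have "cmod ((B *v v) $ i) \<le> (\<Sum>j\<in>UNIV. cmod (B $ i $ j * v $ j))"
    unfolding matrix_vector_mult_def by (simp add: norm_sum)
  also have "\<dots> \<le> (\<Sum>j\<in>(UNIV :: 'n set). K * vnorm_inf v)"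
    by (rule sum_mono)
      (simp add: norm_mult mult_mono assms cmod_le_vnorm_inf order.trans[OF norm_ge_zero assms])
  finally show "cmod ((B *v v) $ i) \<le> real CARD('n) * K * vnorm_inf v"
    by simp
qed

lemma opnorm_inf_ratio_le:
  fixes B :: "complex ^ 'n::finite ^ 'm::finite"
  assumes "\<And>i j. cmod (B $ i $ j) \<le> K" and "v \<noteq> 0"
  shows "vnorm_inf (B *v v) / vnorm_inf v \<le> real CARD('n) * K"
  using vnorm_inf_mult_le[OF assms(1), of v] vnorm_inf_pos[OF assms(2)] by (simp add: divide_le_eq)

lemma opnorm_inf_le:
  fixes B :: "complex ^ 'n::finite ^ 'm::finite"
  assumes "\<And>i j. cmod (B $ i $ j) \<le> K"
  shows "opnorm_inf B \<le> real CARD('n) * K"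
  unfolding opnorm_inf_def
proof (rule cSup_least)
  have "(\<chi> i. 1 :: complex ^ 'n) \<noteq> 0"
    by (metis one_neq_zero vec_lambda_beta zero_index)
  then show "{vnorm_inf (B *v v) / vnorm_inf v |v. v \<noteq> 0} \<noteq> {}"
    by blast
qed (use opnorm_inf_ratio_le[OF assms] in blast)

lemma vnorm_inf_mult_le_opnorm_inf:
  fixes B :: "complex ^ 'n::finite ^ 'm::finite"
  shows "vnorm_inf (B *v v) \<le> opnorm_inf B * vnorm_inf v"
proof (cases "v = 0")
  case True
  then show ?thesis
    by (simp add: vnorm_inf_def)
next
  case False
  have "bounded (range (\<lambda>(i, j). B $ i $ j))"
    by (rule finite_imp_bounded) simp
  then obtain K where K: "\<forall>z\<in>range (\<lambda>(i, j). B $ i $ j). cmod z \<le> K"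
    unfolding bounded_iff by blast
  have "cmod (B $ i $ j) \<le> K" for i j
    by (intro K[rule_format] rev_image_eqI[of "(i, j)"]) auto
  then have "vnorm_inf (B *v v) / vnorm_inf v \<le> opnorm_inf B"
    unfolding opnorm_inf_def using False opnorm_inf_ratio_le[of B K]
    by (intro cSup_upper) (auto simp: bdd_above_def)
  then show ?thesis
    using vnorm_inf_pos[OF False] by (simp add: divide_le_eq mult.commute)
qed

lemma opnorm_inf_le_inorm_inf:
  assumes "\<And>i j. cint_compact (A $ i $ j)" and "mmem B A"
  shows "opnorm_inf B \<le> inorm_inf A"
proof -
  obtain K where "\<And>B i j. mmem B A \<Longrightarrow> cmod (B $ i $ j) \<le> K"
    using imat_compact_entries_bounded[OF assms(1)] by blast
  then have "bdd_above {opnorm_inf B | B. mmem B A}"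
    unfolding bdd_above_def using opnorm_inf_le by blast
  then show ?thesis
    unfolding inorm_inf_def using assms(2) by (intro cSup_upper) auto
qed

lemma cmod_le_sqrt2:
  assumes "\<bar>Re w\<bar> \<le> K" "\<bar>Im w\<bar> \<le> K"
  shows "cmod w \<le> sqrt 2 * K"
proof -
  have "(Re w)\<^sup>2 \<le> K\<^sup>2" "(Im w)\<^sup>2 \<le> K\<^sup>2"
    using power_mono[OF assms(1), of 2] power_mono[OF assms(2), of 2] by simp_all
  then have "cmod w \<le> sqrt (2 * K\<^sup>2)"
    unfolding cmod_def by (intro real_sqrt_le_mono) auto
  also have "\<dots> = sqrt 2 * K"
    using assms by (simp add: real_sqrt_mult)
  finally show ?thesis .
qed

section \<open>Mean value theorem on interval boxes\<close>

lemma mvt_bounded_linear_functional: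
  fixes G :: "'a::real_normed_vector \<Rightarrow> 'b::real_normed_vector" and \<phi> :: "'b \<Rightarrow> real"
  assumes "\<And>z. (G has_derivative G' z) (at z)" and "bounded_linear \<phi>"
  shows "\<exists>t. 0 < t \<and> t < 1 \<and> \<phi> (G b - G a) = \<phi> (G' (a + t *\<^sub>R (b - a)) (b - a))"
proof -
  interpret \<phi>: bounded_linear \<phi>
    by (fact assms(2))
  have "((\<lambda>t. \<phi> (G (a + t *\<^sub>R (b - a)))) has_derivative
          (\<lambda>h. \<phi> (G' (a + t *\<^sub>R (b - a)) (h *\<^sub>R (b - a))))) (at t within {0..1})" for t
    by (rule has_derivative_at_withinI, rule \<phi>.has_derivative[OF has_derivative_compose[OF _ assms(1)]])
      (auto intro!: derivative_eq_intros)
  from mvt_simple[OF zero_less_one this] obtain t where "t \<in> {0<..<1}"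
    "\<phi> (G (a + 1 *\<^sub>R (b - a))) - \<phi> (G (a + 0 *\<^sub>R (b - a)))
       = \<phi> (G' (a + t *\<^sub>R (b - a)) ((1 - 0) *\<^sub>R (b - a)))"
    by blast
  then show ?thesis
    by (auto simp: \<phi>.diff)
qed

lemma vmem_segment:
  assumes "ivec_valid I" "vmem a I" "vmem b I" "0 \<le> t" "t \<le> 1"
  shows "vmem (a + t *\<^sub>R (b - a)) I"
  unfolding vmem_def cmem_def
proof (intro allI conjI)
  fix i
  have convex: "convex (fst (I $ i))" "convex (snd (I $ i))"
    using assms(1) unfolding ivec_valid_def is_cint_def is_rint_def
    by (metis convex_real_interval(5))+
  have "x + t * (y - x) \<in> S" if "convex S" "x \<in> S" "y \<in> S" for x y :: real and S
    using convexD[OF that, of "1 - t" t] assms(4,5) by (simp add: algebra_simps)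
  from this[OF convex(1)] this[OF convex(2)] assms(2,3)
  show "Re ((a + t *\<^sub>R (b - a)) $ i) \<in> fst (I $ i)" "Im ((a + t *\<^sub>R (b - a)) $ i) \<in> snd (I $ i)"
    unfolding vmem_def cmem_def by simp_all
qed

lemma mvt_coordinate_in_box:
  fixes G :: "complex ^ 'n::finite \<Rightarrow> complex ^ 'm::finite" and \<phi> :: "complex \<Rightarrow> real"
  assumes "\<And>z. (G has_derivative (\<lambda>h. DG z *v h)) (at z)" and "bounded_linear \<phi>"
    and "ivec_valid I" "vmem a I" "vmem b I"
  obtains \<xi> where "vmem \<xi> I" "\<phi> ((G b - G a) $ i) = \<phi> ((DG \<xi> *v (b - a)) $ i)"
proof -
  have "bounded_linear (\<lambda>v. \<phi> (v $ i))"
    using bounded_linear_compose[OF assms(2) bounded_linear_vec_nth] .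
  from mvt_bounded_linear_functional[OF assms(1) this] obtain t where
    t: "0 < t" "t < 1" "\<phi> ((G b - G a) $ i) = \<phi> ((DG (a + t *\<^sub>R (b - a)) *v (b - a)) $ i)"
    by blast
  moreover have "vmem (a + t *\<^sub>R (b - a)) I"
    using vmem_segment[OF assms(3-5)] t(1,2) by simp
  ultimately show ?thesis
    using that by blast
qed

text \<open>The mean value form of interval analysis. The real and imaginary parts of each coordinate
  use different intermediate points, which is harmless because complex intervals are
  rectangles.\<close>
lemma vmem_diff_mean_value_form:
  fixes G :: "complex ^ 'n::finite \<Rightarrow> complex ^ 'm::finite"
  assumes deriv: "\<And>z. (G has_derivative (\<lambda>h. DG z *v h)) (at z)"
    and encl: "\<And>z. vmem z I \<Longrightarrow> mmem (DG z) A"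
    and "ivec_valid I" "vmem a I" "vmem b I" "vmem (b - a) D"
  shows "vmem (G b - G a) (mvmul A D)"
proof -
  have "\<exists>w. vmem w (mvmul A D) \<and> \<phi> ((G b - G a) $ i) = \<phi> (w $ i)"
    if "bounded_linear \<phi>" for \<phi> :: "complex \<Rightarrow> real" and i
    using mvt_coordinate_in_box[OF deriv that assms(3-5)] encl vmem_mvmul assms(6) by metis
  from this[OF bounded_linear_Re] this[OF bounded_linear_Im] show ?thesis
    unfolding vmem_def cmem_def by metis
qed

lemma vnorm_inf_diff_le_inorm_inf:
  fixes G :: "complex ^ 'n::finite \<Rightarrow> complex ^ 'm::finite"
  assumes deriv: "\<And>z. (G has_derivative (\<lambda>h. DG z *v h)) (at z)"
    and encl: "\<And>z. vmem z I \<Longrightarrow> mmem (DG z) A"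
    and compact: "\<And>i j. cint_compact (A $ i $ j)"
    and "ivec_valid I" "vmem a I" "vmem b I"
  shows "vnorm_inf (G b - G a) \<le> sqrt 2 * inorm_inf A * vnorm_inf (b - a)"
proof (rule vnorm_inf_le)
  fix i
  have "\<bar>\<phi> ((G b - G a) $ i)\<bar> \<le> inorm_inf A * vnorm_inf (b - a)"
    if \<phi>: "bounded_linear \<phi>" "\<And>w. \<bar>\<phi> w\<bar> \<le> cmod w" for \<phi>
  proof -
    obtain \<xi> where \<xi>: "vmem \<xi> I" "\<phi> ((G b - G a) $ i) = \<phi> ((DG \<xi> *v (b - a)) $ i)"
      using mvt_coordinate_in_box[OF deriv \<phi>(1) assms(4-6)] by blast
    have "\<bar>\<phi> ((G b - G a) $ i)\<bar> \<le> vnorm_inf (DG \<xi> *v (b - a))"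
      using \<xi>(2) \<phi>(2) cmod_le_vnorm_inf order.trans by metis
    also have "\<dots> \<le> opnorm_inf (DG \<xi>) * vnorm_inf (b - a)"
      by (rule vnorm_inf_mult_le_opnorm_inf)
    also have "\<dots> \<le> inorm_inf A * vnorm_inf (b - a)"
      by (intro mult_right_mono opnorm_inf_le_inorm_inf compact encl \<xi>(1) vnorm_inf_nonneg)
    finally show ?thesis .
  qed
  from this[OF bounded_linear_Re abs_Re_le_cmod] this[OF bounded_linear_Im abs_Im_le_cmod]
  have "cmod ((G b - G a) $ i) \<le> sqrt 2 * (inorm_inf A * vnorm_inf (b - a))"
    by (rule cmod_le_sqrt2)
  then show "cmod ((G b - G a) $ i) \<le> sqrt 2 * inorm_inf A * vnorm_inf (b - a)"
    by (simp add: mult.assoc)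
qed

section \<open>The Newton-type map and the Krawczyk operator\<close>

lemma has_derivative_newton_map:
  assumes "is_jacobian F JF"
  shows "((\<lambda>z. z - Y *v F z) has_derivative (\<lambda>h. (mat 1 - Y ** JF z) *v h)) (at z)"
proof -
  have "((\<lambda>z. z - Y *v F z) has_derivative (\<lambda>h. h - Y *v (JF z *v h))) (at z)"
    using assms unfolding is_jacobian_def
    by (intro has_derivative_diff has_derivative_ident
        bounded_linear.has_derivative[OF matrix_vector_mul_bounded_linear]) blast
  then show ?thesis
    by (simp add: matrix_vector_mult_diff_rdistrib matrix_vector_mul_assoc)
qed

lemma mmem_newton_derivative:
  assumes "mat_enclosure JF JFI" "ivec_valid I" "vmem z I"
  shows "mmem (mat 1 - Y ** JF z) (msub mid (mmmul (mpt Y) (JFI I)))"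
proof -
  have "mmem (JF z) (JFI I)"
    using assms unfolding mat_enclosure_def by blast
  then show ?thesis
    unfolding mid_def by (intro mmem_msub mmem_mpt mmem_mmmul)
qed

lemma ivec_valid_vpt: "ivec_valid (vpt x)"
proof -
  have "is_rint {r}" for r
    unfolding is_rint_def by (metis atLeastAtMost_singleton order_refl)
  then show ?thesis
    by (simp add: ivec_valid_def vpt_def is_cint_def cpt_def)
qed

lemma vmem_newton_map_krawczyk:
  assumes "is_jacobian F JF" "vec_enclosure F FI" "mat_enclosure JF JFI"
    and "ivec_valid I" "vmem xt I" "vmem z I"
  shows "vmem (z - Y *v F z) (krawczyk FI JFI xt Y I)"
proof -
  have "vmem (F xt) (FI (vpt xt))"
    using assms(2) ivec_valid_vpt vmem_vpt unfolding vec_enclosure_def by blast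
  then have "vmem (xt - Y *v F xt) (vsub (vpt xt) (mvmul (mpt Y) (FI (vpt xt))))"
    by (intro vmem_vsub vmem_vpt vmem_mvmul mmem_mpt)
  moreover have "vmem ((z - Y *v F z) - (xt - Y *v F xt))
      (mvmul (msub mid (mmmul (mpt Y) (JFI I))) (vsub I (vpt xt)))"
    using vmem_diff_mean_value_form[OF has_derivative_newton_map[OF assms(1)]
        mmem_newton_derivative[OF assms(3,4)] assms(4,5,6) vmem_vsub[OF assms(6) vmem_vpt]] .
  ultimately show ?thesis
    unfolding krawczyk_def using vmem_vadd by force
qed

lemma vnorm_inf_newton_map_diff_le:
  assumes "is_jacobian F JF" "mat_enclosure JF JFI" "ivec_valid I" "vmem a I" "vmem b I"
  shows "vnorm_inf ((b - Y *v F b) - (a - Y *v F a))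
    \<le> sqrt 2 * inorm_inf (msub mid (mmmul (mpt Y) (JFI I))) * vnorm_inf (b - a)"
proof -
  have "imat_valid (JFI I)"
    using assms(2,3) unfolding mat_enclosure_def by blast
  from vnorm_inf_diff_le_inorm_inf[OF has_derivative_newton_map[OF assms(1)]
      mmem_newton_derivative[OF assms(2,3)] cint_compact_krawczyk_matrix[OF this] assms(3-5)]
  show ?thesis .
qed

lemma vmem_ivec_subset: "ivec_subset J I \<Longrightarrow> vmem z J \<Longrightarrow> vmem z I"
  unfolding ivec_subset_def vmem_def cmem_def by blast

lemma iterates_geometric_decay:
  fixes d :: "'a \<Rightarrow> real"
  assumes "\<And>z. P z \<Longrightarrow> P (G z)" "\<And>z. P z \<Longrightarrow> d (G z) \<le> c * d z" "0 \<le> c"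
    and "P (xs 0)" "\<And>i. xs (Suc i) = G (xs i)"
  shows "P (xs i) \<and> d (xs i) \<le> d (xs 0) * c ^ i"
proof (induction i)
  case 0
  then show ?case
    using assms(4) by simp
next
  case (Suc i)
  have "d (xs (Suc i)) \<le> c * d (xs i)"
    using Suc assms(2,5) by simp
  also have "\<dots> \<le> c * (d (xs 0) * c ^ i)"
    using Suc assms(3) by (simp add: mult_left_mono)
  finally show ?case
    using Suc assms(1,5) by (simp add: algebra_simps)
qed

lemma LIMSEQ_if_vnorm_inf_geometric:
  fixes xs :: "nat \<Rightarrow> complex ^ 'n::finite"
  assumes "\<And>i. vnorm_inf (xs i - p) \<le> C * c ^ i" "0 \<le> c" "c < 1"
  shows "xs \<longlonglongrightarrow> p"
proof -
  have "(\<lambda>i. xs i - p) \<longlonglongrightarrow> 0"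
  proof (rule Lim_null_comparison)
    show "\<forall>\<^sub>F i in sequentially. norm (xs i - p) \<le> real CARD('n) * (C * c ^ i)"
    proof (intro always_eventually allI)
      fix i
      have "norm (xs i - p) \<le> real CARD('n) * vnorm_inf (xs i - p)"
        by (rule norm_le_card_vnorm_inf)
      also have "\<dots> \<le> real CARD('n) * (C * c ^ i)"
        using assms(1) by (simp add: mult_left_mono)
      finally show "norm (xs i - p) \<le> real CARD('n) * (C * c ^ i)" .
    qed
    show "(\<lambda>i. real CARD('n) * (C * c ^ i)) \<longlonglongrightarrow> 0"
      using assms(2,3) by (auto intro!: tendsto_mult_right_zero LIMSEQ_power_zero)
  qed
  then show ?thesis
    using Lim_null by blast
qed

theorem proposition4p9:
  fixes F :: "complex ^ 'n::finite \<Rightarrow> complex ^ 'n"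
    and JF :: "complex ^ 'n \<Rightarrow> complex ^ 'n ^ 'n"
    and FI :: "cint ^ 'n \<Rightarrow> cint ^ 'n"
    and JFI :: "cint ^ 'n \<Rightarrow> cint ^ 'n ^ 'n"
    and I :: "cint ^ 'n"
    and xt xstar x :: "complex ^ 'n"
    and Y :: "complex ^ 'n ^ 'n"
    and xs :: "nat \<Rightarrow> complex ^ 'n"
  assumes "poly_system F"
    and "is_jacobian F JF"
    and "vec_enclosure F FI"
    and "mat_enclosure JF JFI"
    and "ivec_valid I"
    and "vmem xt I"
    and "invertible Y"
    and "ivec_subset (krawczyk FI JFI xt Y I) I"
    and "sqrt 2 * inorm_inf (msub mid (mmmul (mpt Y) (JFI I))) < 1"
    and "vmem xstar I" and "F xstar = 0"
    and "vmem x I"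
    and "xs 0 = x"
    and "\<And>i. xs (Suc i) = xs i - Y *v F (xs i)"
  shows "xs \<longlonglongrightarrow> xstar
    \<and> (\<exists>c C. 0 \<le> c \<and> c < 1 \<and> (\<forall>i. vnorm_inf (xs i - xstar) \<le> C * c ^ i))"
proof -
  define G where "G z = z - Y *v F z" for z
  define c where "c = max 0 (sqrt 2 * inorm_inf (msub mid (mmmul (mpt Y) (JFI I))))"
  have c: "0 \<le> c" "c < 1"
    using assms(9) unfolding c_def by auto
  have maps_into: "vmem (G z) I" if "vmem z I" for z
    using vmem_ivec_subset[OF assms(8) vmem_newton_map_krawczyk[OF assms(2-6) that]]
    unfolding G_def .
  have fixed: "G xstar = xstar"
    using assms(11) by (simp add: G_def)
  have contracts: "vnorm_inf (G z - xstar) \<le> c * vnorm_inf (z - xstar)" if "vmem z I" for z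
  proof -
    have "vnorm_inf (G z - G xstar)
        \<le> sqrt 2 * inorm_inf (msub mid (mmmul (mpt Y) (JFI I))) * vnorm_inf (z - xstar)"
      unfolding G_def by (rule vnorm_inf_newton_map_diff_le[OF assms(2,4,5,10) that])
    also have "\<dots> \<le> c * vnorm_inf (z - xstar)"
      unfolding c_def by (intro mult_right_mono vnorm_inf_nonneg) auto
    finally show ?thesis
      by (simp only: fixed)
  qed
  have step: "xs (Suc i) = G (xs i)" for i
    using assms(14) by (simp add: G_def)
  have decay: "vnorm_inf (xs i - xstar) \<le> vnorm_inf (x - xstar) * c ^ i" for i
    using iterates_geometric_decay[of "\<lambda>z. vmem z I" G "\<lambda>z. vnorm_inf (z - xstar)" c xs,
        OF maps_into contracts c(1) assms(12)[folded assms(13)] step] assms(13) by simp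
  show ?thesis
    using LIMSEQ_if_vnorm_inf_geometric[OF decay c] decay c by blast
qed

end
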